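(* Let $a,b$ be positive integers with $3\mid a$ and $3\mid b$. If the Aztec rectangle $\mathcal{AR}_{a,b}$ has a cover by L-trominoes, then $\mathcal{AR}_{a+2,b+2}$ has a cover by L-trominoes.
   Context: A cell is a unit square $[i,i+1]\times[j,j+1]$ with $i,j\in\mathbb{Z}$, labelled $(i,j)$. An L-tromino is a set of three cells equal to a $2\times 2$ block of cells with one cell removed. A cover of a region $R$ (a finite edge-connected set of cells) is a set of pairwise disjoint L-trominoes contained in $R$ whose union is $R$. For positive integers $a,b$, the Aztec rectangle $\mathcal{AR}_{a,b}$ is (up to translation) the region consisting of the cells $(i,j)\in\mathbb{Z}^2$ with $0\le i+j\le 2b$ and $1\le j-i\le 2a+1$; it has $a$ cells along its southwestern side and $b$ cells along its northwestern side. *)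

theory Defs
  imports Main
begin

type_synonym cell = "int \<times> int"

definition block2 :: "cell \<Rightarrow> cell set" where
  "block2 c = {(fst c, snd c), (fst c + 1, snd c), (fst c, snd c + 1), (fst c + 1, snd c + 1)}"

definition is_L_tromino :: "cell set \<Rightarrow> bool" where
  "is_L_tromino T \<longleftrightarrow> (\<exists>c d. d \<in> block2 c \<and> T = block2 c - {d})"

definition is_cover :: "cell set set \<Rightarrow> cell set \<Rightarrow> bool" where
  "is_cover C R \<longleftrightarrow>
     (\<forall>T\<in>C. is_L_tromino T \<and> T \<subseteq> R) \<and>
     (\<forall>T\<in>C. \<forall>T'\<in>C. T \<noteq> T' \<longrightarrow> T \<inter> T' = {}) \<and>
     \<Union>C = R"

definition has_cover :: "cell set \<Rightarrow> bool" where
  "has_cover R \<longleftrightarrow> (\<exists>C. is_cover C R)"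

definition aztec_rect :: "nat \<Rightarrow> nat \<Rightarrow> cell set" where
  "aztec_rect a b = {(i, j). 0 \<le> i + j \<and> i + j \<le> 2 * int b \<and> 1 \<le> j - i \<and> j - i \<le> 2 * int a + 1}"

end

theory Submission
  imports Defs "HOL-Library.Product_Plus"
begin

text \<open>
  Translating \<open>aztec_rect a b\<close> by \<open>(0, 2)\<close> places it inside \<open>aztec_rect (a + 2) (b + 2)\<close>
  and leaves a frame of width one.  The frame splits into four staircases, one along each
  side, of \<open>2a + 3\<close>, \<open>2b + 3\<close>, \<open>2a + 3\<close> and \<open>2b + 3\<close> cells.  Any three consecutive cells of
  a staircase form an L-tromino, so a staircase whose length is divisible by 3 is covered by
  cutting it into consecutive triples.
\<close>

definition perpendicular_unit_steps :: "cell \<Rightarrow> cell \<Rightarrow> bool" where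
  "perpendicular_unit_steps u v \<longleftrightarrow>
     u \<in> {(1, 0), (-1, 0)} \<and> v \<in> {(0, 1), (0, -1)} \<or>
     u \<in> {(0, 1), (0, -1)} \<and> v \<in> {(1, 0), (-1, 0)}"

lemma perpendicular_unit_steps_commute:
  "perpendicular_unit_steps u v \<longleftrightarrow> perpendicular_unit_steps v u"
  unfolding perpendicular_unit_steps_def by blast

lemma is_L_tromino_corner:
  fixes x0 y0 x1 y1 x2 y2 :: int
  assumes "\<bar>x2 - x0\<bar> = 1" and "\<bar>y2 - y0\<bar> = 1" and "x1 = x0 \<and> y1 = y2 \<or> x1 = x2 \<and> y1 = y0"
  shows "is_L_tromino {(x0, y0), (x1, y1), (x2, y2)}"
proof -
  let ?c = "(min x0 x2, min y0 y2)" and ?d = "(x0 + x2 - x1, y0 + y2 - y1)"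
  have "x2 = x0 + 1 \<or> x2 = x0 - 1" and "y2 = y0 + 1 \<or> y2 = y0 - 1"
    using assms(1,2) by auto
  then have "{(x0, y0), (x1, y1), (x2, y2)} = block2 ?c - {?d} \<and> ?d \<in> block2 ?c"
    using assms(3) unfolding block2_def by (elim disjE) auto
  then show ?thesis unfolding is_L_tromino_def by blast
qed

lemma is_L_tromino_bend:
  assumes "perpendicular_unit_steps u v"
  shows "is_L_tromino {p, p + u, p + u + v}"
  using assms unfolding perpendicular_unit_steps_def
  by (cases p) (auto simp: plus_prod_def intro!: is_L_tromino_corner)

text \<open>The path \<open>c, c + u, c + u + v, c + 2u + v, \<dots>\<close> that alternates the steps \<open>u\<close> and \<open>v\<close>.\<close>

definition staircase :: "cell \<Rightarrow> cell \<Rightarrow> cell \<Rightarrow> int \<Rightarrow> cell" where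
  "staircase c u v q =
     c + ((q + 1) div 2 * fst u + q div 2 * fst v, (q + 1) div 2 * snd u + q div 2 * snd v)"

lemma staircase_step_odd: "staircase c u v (2 * m + 1) = staircase c u v (2 * m) + u"
  unfolding staircase_def by (cases u) (simp add: algebra_simps)

lemma staircase_step_even: "staircase c u v (2 * m + 2) = staircase c u v (2 * m + 1) + v"
  unfolding staircase_def by (cases v) (simp add: algebra_simps)

lemma is_L_tromino_staircase:
  assumes "perpendicular_unit_steps u v"
  shows "is_L_tromino (staircase c u v ` {q..q + 2})"
proof -
  have triple: "{q..q + 2} = {q, q + 1, q + 2}" by auto
  have "\<exists>m. q = 2 * m \<or> q = 2 * m + 1" by presburger
  then obtain m where "q = 2 * m \<or> q = 2 * m + 1" by blast
  then show ?thesis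
  proof
    assume "q = 2 * m"
    then show ?thesis using is_L_tromino_bend[OF assms] unfolding triple
      by (simp add: staircase_step_odd staircase_step_even)
  next
    assume "q = 2 * m + 1"
    moreover have "staircase c u v (2 * m + 3) = staircase c u v (2 * m + 2) + u"
      using staircase_step_odd[of c u v "m + 1"] by (simp add: algebra_simps)
    ultimately show ?thesis using is_L_tromino_bend[of v u] assms unfolding triple
      by (simp add: staircase_step_even perpendicular_unit_steps_commute add.assoc)
  qed
qed

lemma inj_staircase:
  assumes "perpendicular_unit_steps u v"
  shows "inj (staircase c u v)"
proof
  fix q q' assume "staircase c u v q = staircase c u v q'"
  then have "(q + 1) div 2 = (q' + 1) div 2 \<and> q div 2 = q' div 2"
    using assms unfolding perpendicular_unit_steps_def staircase_def by (cases c) auto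
  then show "q = q'" by presburger
qed

lemma is_cover_Un:
  assumes "is_cover C R" and "is_cover C' R'" and "R \<inter> R' = {}"
  shows "is_cover (C \<union> C') (R \<union> R')"
proof -
  have cross: "T \<inter> T' = {}" if "T \<in> C" "T' \<in> C'" for T T'
    using that assms unfolding is_cover_def by blast
  have "T \<inter> T' = {}" if "T \<in> C \<union> C'" "T' \<in> C \<union> C'" "T \<noteq> T'" for T T'
    using that assms(1,2) cross[of T T'] cross[of T' T] unfolding is_cover_def
    by (metis Int_commute Un_iff)
  moreover have "is_L_tromino T \<and> T \<subseteq> R \<union> R'" if "T \<in> C \<union> C'" for T
    using that assms(1,2) unfolding is_cover_def by blast
  moreover have "\<Union>(C \<union> C') = R \<union> R'"
    using assms(1,2) unfolding is_cover_def by simp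
  ultimately show ?thesis unfolding is_cover_def by blast
qed

lemma has_cover_Un:
  "has_cover R \<Longrightarrow> has_cover R' \<Longrightarrow> R \<inter> R' = {} \<Longrightarrow> has_cover (R \<union> R')"
  unfolding has_cover_def using is_cover_Un by blast

lemma is_L_tromino_translate:
  assumes "is_L_tromino T"
  shows "is_L_tromino ((+) w ` T)"
proof -
  obtain c d where "d \<in> block2 c" and T: "T = block2 c - {d}"
    using assms unfolding is_L_tromino_def by blast
  moreover have "(+) w ` block2 c = block2 (w + c)"
    unfolding block2_def by (simp add: plus_prod_def algebra_simps)
  ultimately have "(+) w ` T = block2 (w + c) - {w + d}" and "w + d \<in> block2 (w + c)"
    by (auto simp: image_set_diff)
  then show ?thesis unfolding is_L_tromino_def by blast
qed

lemma is_cover_image: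
  assumes "inj f" and "\<And>T. is_L_tromino T \<Longrightarrow> is_L_tromino (f ` T)" and "is_cover C R"
  shows "is_cover ((`) f ` C) (f ` R)"
proof -
  have "f ` T1 \<inter> f ` T2 = {}" if "T1 \<in> C" "T2 \<in> C" "f ` T1 \<noteq> f ` T2" for T1 T2
  proof -
    have "T1 \<inter> T2 = {}" using that assms(3) unfolding is_cover_def by blast
    then show ?thesis by (simp add: image_Int[OF assms(1), symmetric])
  qed
  moreover have "\<Union>((`) f ` C) = f ` R" using assms(3) unfolding is_cover_def by auto
  ultimately show ?thesis using assms(2,3) unfolding is_cover_def by (auto intro: image_mono)
qed

lemma has_cover_translate: "has_cover R \<Longrightarrow> has_cover ((+) w ` R)"
  unfolding has_cover_def using is_cover_image[OF inj_on_add is_L_tromino_translate] by blast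

lemma has_cover_path:
  fixes p :: "int \<Rightarrow> cell"
  assumes "inj_on p {0..<3 * n}" and "\<And>t. 0 \<le> t \<Longrightarrow> t < n \<Longrightarrow> is_L_tromino (p ` {3 * t..3 * t + 2})"
  shows "has_cover (p ` {0..<3 * n})"
proof -
  let ?block = "\<lambda>t. {3 * t..3 * t + 2}"
  have blocks: "?block t \<subseteq> {0..<3 * n}" if "t \<in> {0..<n}" for t
    using that by auto
  have "(\<Union>t\<in>{0..<n}. ?block t) = {0..<3 * n}"
  proof (intro equalityI subsetI)
    fix q assume "q \<in> {0..<3 * n}"
    then have "q div 3 \<in> {0..<n}" and "q \<in> ?block (q div 3)" by auto
    then show "q \<in> (\<Union>t\<in>{0..<n}. ?block t)" by blast
  qed (use blocks in blast)
  then have "\<Union>((\<lambda>t. p ` ?block t) ` {0..<n}) = p ` {0..<3 * n}" by blast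
  moreover have "p ` ?block t \<inter> p ` ?block t' = {}"
    if "t \<in> {0..<n}" "t' \<in> {0..<n}" "p ` ?block t \<noteq> p ` ?block t'" for t t'
  proof -
    have "?block t \<inter> ?block t' = {}" using that(3) by (cases "t = t'") auto
    then show ?thesis using inj_on_image_Int[OF assms(1) blocks blocks] that by (metis image_empty)
  qed
  ultimately have "is_cover ((\<lambda>t. p ` ?block t) ` {0..<n}) (p ` {0..<3 * n})"
    unfolding is_cover_def using assms(2) blocks by (auto intro: image_mono)
  then show ?thesis unfolding has_cover_def by blast
qed

lemma has_cover_staircase:
  assumes "perpendicular_unit_steps u v"
  shows "has_cover (staircase c u v ` {0..<3 * n})"
  by (rule has_cover_path[OF inj_on_subset[OF inj_staircase[OF assms] subset_UNIV]
        is_L_tromino_staircase[OF assms]])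

lemma image_staircase_southwest:
  "staircase (0, 1) (-1, 0) (0, 1) ` {0..<2 * A + 3} =
     {(i, j). 0 \<le> i + j \<and> i + j \<le> 1 \<and> 1 \<le> j - i \<and> j - i \<le> 2 * A + 3}" (is "?path = ?side")
proof
  show "?path \<subseteq> ?side" unfolding staircase_def by auto
  show "?side \<subseteq> ?path"
  proof
    fix x assume "x \<in> ?side"
    then obtain i j where "x = (i, j)" and "0 \<le> i + j \<and> i + j \<le> 1 \<and> 1 \<le> j - i \<and> j - i \<le> 2 * A + 3" by blast
    then have "x = staircase (0, 1) (-1, 0) (0, 1) (j - i - 1)" and "j - i - 1 \<in> {0..<2 * A + 3}"
      by (auto simp: staircase_def; presburger)+
    then show "x \<in> ?path" by blast
  qed
qed

lemma image_staircase_northwest: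
  "staircase (-A - 2, A + 2) (0, 1) (1, 0) ` {0..<2 * B + 3} =
     {(i, j). 2 * A + 4 \<le> j - i \<and> j - i \<le> 2 * A + 5 \<and> 0 \<le> i + j \<and> i + j \<le> 2 * B + 2}" (is "?path = ?side")
proof
  show "?path \<subseteq> ?side" unfolding staircase_def by auto
  show "?side \<subseteq> ?path"
  proof
    fix x assume "x \<in> ?side"
    then obtain i j where "x = (i, j)" and "2 * A + 4 \<le> j - i \<and> j - i \<le> 2 * A + 5 \<and> 0 \<le> i + j \<and> i + j \<le> 2 * B + 2" by blast
    then have "x = staircase (-A - 2, A + 2) (0, 1) (1, 0) (i + j)" and "i + j \<in> {0..<2 * B + 3}"
      by (auto simp: staircase_def; presburger)+
    then show "x \<in> ?path" by blast
  qed
qed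

lemma image_staircase_northeast:
  "staircase (B - A - 1, A + B + 4) (1, 0) (0, -1) ` {0..<2 * A + 3} =
     {(i, j). 2 * B + 3 \<le> i + j \<and> i + j \<le> 2 * B + 4 \<and> 3 \<le> j - i \<and> j - i \<le> 2 * A + 5}" (is "?path = ?side")
proof
  show "?path \<subseteq> ?side" unfolding staircase_def by auto
  show "?side \<subseteq> ?path"
  proof
    fix x assume "x \<in> ?side"
    then obtain i j where "x = (i, j)" and "2 * B + 3 \<le> i + j \<and> i + j \<le> 2 * B + 4 \<and> 3 \<le> j - i \<and> j - i \<le> 2 * A + 5" by blast
    then have "x = staircase (B - A - 1, A + B + 4) (1, 0) (0, -1) (2 * A + 5 - (j - i))" and "2 * A + 5 - (j - i) \<in> {0..<2 * A + 3}"
      by (auto simp: staircase_def; presburger)+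
    then show "x \<in> ?path" by blast
  qed
qed

lemma image_staircase_southeast:
  "staircase (B + 1, B + 3) (0, -1) (-1, 0) ` {0..<2 * B + 3} =
     {(i, j). 1 \<le> j - i \<and> j - i \<le> 2 \<and> 2 \<le> i + j \<and> i + j \<le> 2 * B + 4}" (is "?path = ?side")
proof
  show "?path \<subseteq> ?side" unfolding staircase_def by auto
  show "?side \<subseteq> ?path"
  proof
    fix x assume "x \<in> ?side"
    then obtain i j where "x = (i, j)" and "1 \<le> j - i \<and> j - i \<le> 2 \<and> 2 \<le> i + j \<and> i + j \<le> 2 * B + 4" by blast
    then have "x = staircase (B + 1, B + 3) (0, -1) (-1, 0) (2 * B + 4 - (i + j))" and "2 * B + 4 - (i + j) \<in> {0..<2 * B + 3}"
      by (auto simp: staircase_def; presburger)+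
    then show "x \<in> ?path" by blast
  qed
qed

lemma translate_aztec_rect:
  "(+) (0, 2) ` aztec_rect a b =
     {(i, j). 2 \<le> i + j \<and> i + j \<le> 2 * int b + 2 \<and> 3 \<le> j - i \<and> j - i \<le> 2 * int a + 3}"
  (is "?shifted = ?inner")
proof
  show "?shifted \<subseteq> ?inner" unfolding aztec_rect_def by auto
  show "?inner \<subseteq> ?shifted"
  proof
    fix x assume "x \<in> ?inner"
    then obtain i j where "x = (0, 2) + (i, j - 2)" and "(i, j - 2) \<in> aztec_rect a b"
      unfolding aztec_rect_def by auto
    then show "x \<in> ?shifted" by blast
  qed
qed

lemma aztec_rect_frame:
  "aztec_rect (a + 2) (b + 2) - (+) (0, 2) ` aztec_rect a b =
     staircase (0, 1) (-1, 0) (0, 1) ` {0..<2 * int a + 3} \<union>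
     staircase (-int a - 2, int a + 2) (0, 1) (1, 0) ` {0..<2 * int b + 3} \<union>
     staircase (int b - int a - 1, int a + int b + 4) (1, 0) (0, -1) ` {0..<2 * int a + 3} \<union>
     staircase (int b + 1, int b + 3) (0, -1) (-1, 0) ` {0..<2 * int b + 3}"
  unfolding image_staircase_southwest image_staircase_northwest
    image_staircase_northeast image_staircase_southeast translate_aztec_rect
  unfolding aztec_rect_def by auto

lemma has_cover_aztec_frame:
  assumes "3 dvd a" and "3 dvd b"
  shows "has_cover (aztec_rect (a + 2) (b + 2) - (+) (0, 2) ` aztec_rect a b)"
proof -
  obtain k l where "a = 3 * k" and "b = 3 * l" using assms by (auto elim!: dvdE)
  then have len_a: "2 * int a + 3 = 3 * (2 * int k + 1)"
    and len_b: "2 * int b + 3 = 3 * (2 * int l + 1)" by simp_all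
  have sides:
    "has_cover (staircase (0, 1) (-1, 0) (0, 1) ` {0..<2 * int a + 3})"
    "has_cover (staircase (-int a - 2, int a + 2) (0, 1) (1, 0) ` {0..<2 * int b + 3})"
    "has_cover (staircase (int b - int a - 1, int a + int b + 4) (1, 0) (0, -1) ` {0..<2 * int a + 3})"
    "has_cover (staircase (int b + 1, int b + 3) (0, -1) (-1, 0) ` {0..<2 * int b + 3})"
    unfolding len_a len_b by (rule has_cover_staircase, simp add: perpendicular_unit_steps_def)+
  show ?thesis
    unfolding aztec_rect_frame
    by (intro has_cover_Un sides)
      (auto simp: image_staircase_southwest image_staircase_northwest
    image_staircase_northeast image_staircase_southeast)
qed

theorem lemma2:
  fixes a b :: nat
  assumes "0 < a" and "0 < b" and "3 dvd a" and "3 dvd b"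
    and "has_cover (aztec_rect a b)"
  shows "has_cover (aztec_rect (a + 2) (b + 2))"
  \<comment> \<open>The frame argument does not need \<open>0 < a\<close> and \<open>0 < b\<close>.\<close>
proof -
  have "(+) (0, 2) ` aztec_rect a b \<subseteq> aztec_rect (a + 2) (b + 2)"
    unfolding translate_aztec_rect by (auto simp: aztec_rect_def)
  then have "aztec_rect (a + 2) (b + 2) =
      (+) (0, 2) ` aztec_rect a b \<union> (aztec_rect (a + 2) (b + 2) - (+) (0, 2) ` aztec_rect a b)"
    by blast
  also have "has_cover \<dots>"
    using has_cover_translate[OF assms(5)] has_cover_aztec_frame[OF assms(3,4)]
    by (rule has_cover_Un) blast
  finally show ?thesis .
qed

end
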